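(* Let $c>0$, $\alpha>0$ and $F\in C^2(\mathbb{R}\times[0,\infty))$. Let $w(x,t)$ be the solution of the Cauchy problem for the forced wave equation $$\frac{\partial^2 w}{\partial t^2}= c^2 \frac{\partial^2 w}{\partial x^2}+F(x,t),\qquad w(x,0)=0,\qquad \frac{\partial w}{\partial t}(x,0)=0,$$ i.e. $w(x,t)=\frac{1}{2c}\int_0^t ds\int_{x-c(t-s)}^{x+c(t-s)}F(y,s)\,dy$. Define $$v(x,t)=\frac{2}{B(\alpha,\frac12)}\int_0^1(1-u^2)^{\alpha-1}\,w(x,ut)\,du .$$ Then $v$ solves the non-homogeneous Euler–Poisson–Darboux problem $$\frac{\partial^2 v}{\partial t^2}+\frac{2\alpha}{t}\frac{\partial v}{\partial t}= c^2 \frac{\partial^2 v}{\partial x^2}+\frac{2}{B(\alpha,\frac12)}\int_0^1(1-u^2)^{\alpha-1}F(x,ut)\,du,\quad t>0,$$ with $v(x,0)=0$ and $\frac{\partial v}{\partial t}(x,0)=0$.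
   Context: $B(a,b)=\Gamma(a)\Gamma(b)/\Gamma(a+b)$ denotes the Beta function. *)

theory Defs
  imports "HOL-Analysis.Analysis"
begin

definition C2_halfplane :: "(real \<Rightarrow> real \<Rightarrow> real) \<Rightarrow> bool" where
  "C2_halfplane F \<longleftrightarrow>
    (\<exists>Fx Ft Fxx Fxt Ftx Ftt.
      (\<forall>x. \<forall>t\<ge>0.
         ((\<lambda>y. F y t) has_real_derivative Fx x t) (at x) \<and>
         ((\<lambda>s. F x s) has_real_derivative Ft x t) (at t within {0..}) \<and>
         ((\<lambda>y. Fx y t) has_real_derivative Fxx x t) (at x) \<and>
         ((\<lambda>s. Fx x s) has_real_derivative Fxt x t) (at t within {0..}) \<and>
         ((\<lambda>y. Ft y t) has_real_derivative Ftx x t) (at x) \<and>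
         ((\<lambda>s. Ft x s) has_real_derivative Ftt x t) (at t within {0..})) \<and>
      continuous_on (UNIV \<times> {0..}) (\<lambda>(x, t). F x t) \<and>
      continuous_on (UNIV \<times> {0..}) (\<lambda>(x, t). Fx x t) \<and>
      continuous_on (UNIV \<times> {0..}) (\<lambda>(x, t). Ft x t) \<and>
      continuous_on (UNIV \<times> {0..}) (\<lambda>(x, t). Fxx x t) \<and>
      continuous_on (UNIV \<times> {0..}) (\<lambda>(x, t). Fxt x t) \<and>
      continuous_on (UNIV \<times> {0..}) (\<lambda>(x, t). Ftx x t) \<and>
      continuous_on (UNIV \<times> {0..}) (\<lambda>(x, t). Ftt x t))"

definition wave_sol :: "real \<Rightarrow> (real \<Rightarrow> real \<Rightarrow> real) \<Rightarrow> real \<Rightarrow> real \<Rightarrow> real" where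
  "wave_sol c F x t =
     1 / (2 * c) * integral {0..t} (\<lambda>s. integral {x - c * (t - s) .. x + c * (t - s)} (\<lambda>y. F y s))"

definition EPD_avg :: "real \<Rightarrow> (real \<Rightarrow> real \<Rightarrow> real) \<Rightarrow> real \<Rightarrow> real \<Rightarrow> real" where
  "EPD_avg \<alpha> g x t =
     2 / Beta \<alpha> (1/2) * integral {0..1} (\<lambda>u. (1 - u^2) powr (\<alpha> - 1) * g x (u * t))"

end

theory Submission
  imports Defs
begin

text \<open>
  The averaging operator
  \<open>v(x,t) = (2/B(\<alpha>,1/2)) \<integral>\<^sub>0\<^sup>1 (1-u\<^sup>2)\<^sup>\<alpha>\<^sup>-\<^sup>1 w(x,ut) du\<close> is differentiated under the integral
  sign; the kernel may be singular at \<open>u = 1\<close>, so we prove a differentiation lemma for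
  integrals against an arbitrary absolutely integrable weight.  The EPD identity then
  comes from the wave equation for \<open>w\<close> together with one integration by parts:
  \<open>t \<integral> (1-u\<^sup>2)\<^sup>\<alpha>\<^sup>-\<^sup>1 (1-u\<^sup>2) w\<^sub>t\<^sub>t(x,ut) du = 2\<alpha> \<integral> (1-u\<^sup>2)\<^sup>\<alpha>\<^sup>-\<^sup>1 u w\<^sub>t(x,ut) du\<close>, whose boundary terms
  vanish because \<open>w\<^sub>t(x,0) = 0\<close> and \<open>(1-u\<^sup>2)\<^sup>\<alpha> = 0\<close> at \<open>u = 1\<close>.
\<close>

lemma integral_rescale_unit_interval:
  fixes h :: "real \<Rightarrow> real"
  assumes "t \<ge> 0"
  shows "integral {0..t} h = t * integral {0..1} (\<lambda>\<theta>. h (t * \<theta>))"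
proof (cases "t = 0")
  case True then show ?thesis by simp
next
  case False
  with assms have t: "t > 0" by simp
  have img: "(\<lambda>x. x / t) ` {0..t} = {0..1}"
  proof
    show "(\<lambda>x. x / t) ` {0..t} \<subseteq> {0..1}" using t by (auto simp: field_simps)
    show "{0..1} \<subseteq> (\<lambda>x. x / t) ` {0..t}"
    proof
      fix y :: real assume "y \<in> {0..1}"
      then have "t * y \<in> {0..t}" "y = (t*y)/t" using t by (auto simp: mult_le_cancel_left1)
      then show "y \<in> (\<lambda>x. x / t) ` {0..t}" by blast
    qed
  qed
  have "integral ((\<lambda>x. x / t) ` {0..t}) (\<lambda>x. h (t * x)) = (1 / \<bar>t\<bar>) *\<^sub>R integral {0..t} h"
    using t by (intro integral_stretch_real) auto
  then show ?thesis using t by (simp add: img)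
qed

lemma continuous_on_compose_halfplane:
  fixes H :: "real \<Rightarrow> real \<Rightarrow> real" and a b :: "'a::topological_space \<Rightarrow> real"
  assumes H: "continuous_on (UNIV \<times> {0..}) (\<lambda>(z,s). H z s)"
    and a: "continuous_on A a" and b: "continuous_on A b" and b_nonneg: "\<And>p. p \<in> A \<Longrightarrow> b p \<ge> 0"
  shows "continuous_on A (\<lambda>p. H (a p) (b p))"
proof -
  have "continuous_on A ((\<lambda>(z,s). H z s) \<circ> (\<lambda>p. (a p, b p)))"
  proof (rule continuous_on_compose)
    show "continuous_on A (\<lambda>p. (a p, b p))" by (intro continuous_intros a b)
    show "continuous_on ((\<lambda>p. (a p, b p)) ` A) (\<lambda>(z,s). H z s)"
      by (rule continuous_on_subset[OF H]) (use b_nonneg in auto)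
  qed
  then show ?thesis by (simp add: o_def)
qed

lemma continuous_on_compose_halfline:
  fixes f f' b :: "real \<Rightarrow> real"
  assumes f: "\<And>r. r \<ge> 0 \<Longrightarrow> (f has_real_derivative f' r) (at r within {0..})"
    and b: "continuous_on A b" and b_nonneg: "\<And>q. q \<in> A \<Longrightarrow> b q \<ge> 0"
  shows "continuous_on A (\<lambda>q. f (b q))"
proof -
  have "continuous_on {0..} f"
    using f by (meson DERIV_continuous atLeast_iff continuous_on_eq_continuous_within)
  then show ?thesis
    using continuous_on_compose2[OF _ b] b_nonneg by auto
qed

text \<open>Continuity of \<open>(x,t) \<mapsto> \<integral>\<^sub>0\<^sup>t G(x,t,s) ds\<close>, by rescaling to a fixed interval.\<close>
lemma continuous_on_integral_upper_limit:
  fixes G :: "real \<Rightarrow> real \<Rightarrow> real \<Rightarrow> real"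
  assumes G: "continuous_on (UNIV \<times> UNIV \<times> {0..}) (\<lambda>(x,t,s). G x t s)"
  shows "continuous_on (UNIV \<times> {0..}) (\<lambda>(x,t). integral {0..t} (G x t))"
proof -
  have "continuous_on ((UNIV \<times> {0..}) \<times> cbox 0 1)
      ((\<lambda>(x,t,s). G x t s) \<circ> (\<lambda>(p::real\<times>real, \<theta>::real). (fst p, snd p, snd p * \<theta>)))"
  proof (rule continuous_on_compose)
    show "continuous_on ((UNIV \<times> {0..}) \<times> cbox 0 1) (\<lambda>(p::real\<times>real, \<theta>::real). (fst p, snd p, snd p * \<theta>))"
      by (auto simp: split_beta intro!: continuous_intros)
    show "continuous_on ((\<lambda>(p::real\<times>real, \<theta>::real). (fst p, snd p, snd p * \<theta>)) ` ((UNIV \<times> {0..}) \<times> cbox 0 1))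
        (\<lambda>(x,t,s). G x t s)"
      by (rule continuous_on_subset[OF G]) auto
  qed
  then have "continuous_on (UNIV \<times> {0..})
      (\<lambda>p::real\<times>real. integral (cbox 0 1) (\<lambda>\<theta>. G (fst p) (snd p) (snd p * \<theta>)))"
    by (intro integral_continuous_on_param) (simp add: o_def split_beta)
  then have "continuous_on (UNIV \<times> {0..})
      (\<lambda>p::real\<times>real. snd p * integral {0..1} (\<lambda>\<theta>. G (fst p) (snd p) (snd p * \<theta>)))"
    by (auto intro!: continuous_intros)
  then show ?thesis
    by (rule continuous_on_eq)
      (auto simp: split_beta integral_rescale_unit_interval[of _ "G _ _"])
qed

lemma has_real_derivative_integral_upper_limit:
  fixes \<phi> \<phi>1 :: "real \<Rightarrow> real \<Rightarrow> real"
  assumes d: "\<And>t s. s \<ge> 0 \<Longrightarrow> ((\<lambda>t. \<phi> t s) has_real_derivative \<phi>1 t s) (at t)"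
    and c0: "continuous_on (UNIV \<times> {0..}) (\<lambda>(t,s). \<phi> t s)"
    and c1: "continuous_on (UNIV \<times> {0..}) (\<lambda>(t,s). \<phi>1 t s)"
    and t0: "t0 \<ge> 0"
  shows "((\<lambda>t. integral {0..t} (\<phi> t)) has_real_derivative (\<phi> t0 t0 + integral {0..t0} (\<phi>1 t0)))
           (at t0 within {0..})"
proof -
  have cs: "continuous_on {0..a} (\<phi> b)" for a b
    by (rule continuous_on_compose2[OF c0, of _ "\<lambda>s. (b,s)", simplified]) (auto intro!: continuous_intros)
  have fx: "((\<lambda>b. integral {0..t0} (\<phi> b)) has_derivative (*) (integral {0..t0} (\<phi>1 t0))) (at t0 within UNIV)"
  proof -
    have "((\<lambda>b. integral (cbox 0 t0) (\<phi> b)) has_real_derivative integral (cbox 0 t0) (\<phi>1 t0)) (at t0 within UNIV)"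
      by (rule leibniz_rule_field_derivative)
        (use d cs c1 in \<open>auto intro!: integrable_continuous_real continuous_on_subset[OF c1]\<close>)
    then show ?thesis by (simp add: has_field_derivative_def)
  qed
  have fy: "((\<lambda>a. integral {0..a} (\<phi> b)) has_derivative blinfun_apply (blinfun_mult_right (\<phi> b a)))
      (at a within {0..})" if "a \<in> {0..}" for a b
  proof -
    have "((\<lambda>a. integral {0..a} (\<phi> b)) has_real_derivative \<phi> b a) (at a within {0..a+1})"
      using that by (intro integral_has_real_derivative cs) auto
    moreover have "at a within {0..a+1} = at a within {0..}"
      by (rule at_within_nhd[of _ "{..<a+1}"]) auto
    ultimately show ?thesis by (simp add: has_field_derivative_def mult.commute)
  qed
  have fyc: "continuous (at (t0, t0) within UNIV \<times> {0..}) (\<lambda>(b, a). blinfun_mult_right (\<phi> b a))"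
  proof -
    have "continuous_on (UNIV \<times> {0..}) (\<lambda>(b, a). blinfun_mult_right (\<phi> b a))"
      using c0 by (auto simp: split_beta intro!: continuous_intros)
    then show ?thesis using t0 by (simp add: continuous_on_eq_continuous_within)
  qed
  have J: "((\<lambda>(b, a). integral {0..a} (\<phi> b)) has_derivative
      (\<lambda>(tx, ty). integral {0..t0} (\<phi>1 t0) * tx + blinfun_apply (blinfun_mult_right (\<phi> t0 t0)) ty))
      (at (t0, t0) within UNIV \<times> {0..})"
    by (rule has_derivative_partialsI[OF fx fy fyc]) (use t0 in auto)
  have D: "((\<lambda>t. (t,t)) has_derivative (\<lambda>h. (h,h))) (at t0 within {0..})"
    by (auto intro!: derivative_eq_intros)
  have "(((\<lambda>(b, a). integral {0..a} (\<phi> b)) \<circ> (\<lambda>t. (t,t))) has_derivative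
     ((\<lambda>(tx, ty). integral {0..t0} (\<phi>1 t0) * tx + blinfun_apply (blinfun_mult_right (\<phi> t0 t0)) ty) \<circ> (\<lambda>h. (h,h))))
     (at t0 within {0..})"
    by (rule diff_chain_within[OF D has_derivative_subset[OF J]]) auto
  moreover have "(\<lambda>(tx, ty). integral {0..t0} (\<phi>1 t0) * tx + blinfun_apply (blinfun_mult_right (\<phi> t0 t0)) ty)
      \<circ> (\<lambda>h. (h,h)) = (*) (\<phi> t0 t0 + integral {0..t0} (\<phi>1 t0))"
    by (auto simp: algebra_simps)
  ultimately show ?thesis
    by (simp add: has_field_derivative_def o_def)
qed

lemma has_real_derivative_scaled_halfline:
  fixes f f' :: "real \<Rightarrow> real"
  assumes d: "\<And>r. r \<ge> 0 \<Longrightarrow> (f has_real_derivative f' r) (at r within {0..})"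
    and u: "u \<ge> 0" and p: "p \<ge> 0"
  shows "((\<lambda>p. f (u*p)) has_real_derivative f' (u*p) * u) (at p within {0..})"
proof -
  have "(f has_real_derivative f' (u*p)) (at (u*p) within ((\<lambda>p. u*p) ` {0..}))"
    by (rule DERIV_subset[OF d]) (use u p in auto)
  moreover have "((\<lambda>p. u*p) has_real_derivative u) (at p within {0..})"
    by (auto intro!: derivative_eq_intros)
  ultimately show ?thesis using DERIV_image_chain by (fastforce simp: o_def)
qed

lemma has_real_derivative_halfline_interior:
  assumes "(f has_real_derivative D) (at t within {0..})" "t > 0"
  shows "(f has_real_derivative D) (at t)"
proof -
  have "t \<in> interior {0..}" using assms(2) by simp
  then show ?thesis using assms(1) at_within_interior by metis
qed

lemma absolutely_integrable_times_continuous: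
  fixes K h :: "real \<Rightarrow> real"
  assumes K: "K absolutely_integrable_on {0..1}" and h: "continuous_on {0..1} h"
  shows "(\<lambda>u. K u * h u) absolutely_integrable_on {0..1}"
proof -
  have "(\<lambda>u. h u * K u) absolutely_integrable_on {0..1}"
  proof (rule absolutely_integrable_bounded_measurable_product_real[OF _ _ _ K])
    show "h \<in> borel_measurable (lebesgue_on {0..1})"
      by (rule continuous_imp_measurable_on_sets_lebesgue[OF h]) auto
    show "bounded (h ` {0..1})"
      by (rule compact_imp_bounded[OF compact_continuous_image[OF h]]) auto
  qed auto
  then show ?thesis by (simp add: mult.commute)
qed

lemma integrable_times_continuous:
  fixes K h :: "real \<Rightarrow> real"
  assumes "K absolutely_integrable_on {0..1}" and "continuous_on {0..1} h"
  shows "(\<lambda>u. K u * h u) integrable_on {0..1}"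
  using absolutely_integrable_times_continuous[OF assms] by (simp add: absolutely_integrable_on_def)

lemma weighted_integral_abs_bound:
  fixes K h :: "real \<Rightarrow> real"
  assumes K: "K absolutely_integrable_on {0..1}" and h: "continuous_on {0..1} h"
    and bound: "\<And>u. u \<in> {0..1} \<Longrightarrow> \<bar>h u\<bar> \<le> B"
  shows "\<bar>integral {0..1} (\<lambda>u. K u * h u)\<bar> \<le> integral {0..1} (\<lambda>u. \<bar>K u\<bar>) * B"
proof -
  have absK: "(\<lambda>u. \<bar>K u\<bar>) integrable_on {0..1}"
    using K by (simp add: absolutely_integrable_on_def)
  have "norm (integral {0..1} (\<lambda>u. K u * h u)) \<le> integral {0..1} (\<lambda>u. \<bar>K u\<bar> * B)"
  proof (rule integral_norm_bound_integral)
    show "(\<lambda>u. K u * h u) integrable_on {0..1}" by (rule integrable_times_continuous[OF K h])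
    show "(\<lambda>u. \<bar>K u\<bar> * B) integrable_on {0..1}" using absK by (rule integrable_on_mult_left)
    show "norm (K u * h u) \<le> \<bar>K u\<bar> * B" if "u \<in> {0..1}" for u
      using bound[OF that] by (auto simp: abs_mult intro: mult_left_mono)
  qed
  then show ?thesis by (simp add: integral_mult_left)
qed

lemma uniform_first_order_approximation:
  fixes g g' :: "real \<Rightarrow> real \<Rightarrow> real"
  assumes S: "convex S" "p0 \<in> S"
    and d: "\<And>p u. p \<in> S \<Longrightarrow> u \<in> {0..1} \<Longrightarrow> ((\<lambda>p. g p u) has_real_derivative g' p u) (at p within S)"
    and c': "continuous_on (S \<times> {0..1}) (\<lambda>(p,u). g' p u)"
    and e: "e > 0"
  shows "\<exists>r>0. \<forall>y\<in>S. dist y p0 < r \<longrightarrow>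
           (\<forall>u\<in>{0..1}. \<bar>g y u - g p0 u - (y - p0) * g' p0 u\<bar> \<le> e * \<bar>y - p0\<bar>)"
proof -
  obtain X0 where X0: "p0 \<in> X0" "open X0"
    "\<forall>x\<in>X0 \<inter> S. \<forall>t \<in> {0..1}. dist ((\<lambda>(p,u). g' p u) (x, t)) ((\<lambda>(p,u). g' p u) (p0, t)) \<le> e"
    using continuous_on_prod_compactE[OF c' compact_Icc S(2) e] by blast
  obtain r where r: "r > 0" "ball p0 r \<subseteq> X0" using X0 open_contains_ball by blast
  show ?thesis
  proof (intro exI[of _ r] conjI r ballI impI)
    fix y u :: real assume y: "y \<in> S" "dist y p0 < r" and u: "u \<in> {0..1}"
    let ?S = "S \<inter> ball p0 r"
    txt \<open>Mean value inequality for \<open>q \<mapsto> g q u - q g'(p\<^sub>0,u)\<close> on the convex set \<open>?S\<close>.\<close>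
    have "norm ((\<lambda>q. g q u - q * g' p0 u) y - (\<lambda>q. g q u - q * g' p0 u) p0) \<le> e * norm (y - p0)"
    proof (rule field_differentiable_bound[where f' = "\<lambda>q. g' q u - g' p0 u"])
      show "convex ?S" using S by (intro convex_Int) auto
      show "((\<lambda>q. g q u - q * g' p0 u) has_field_derivative g' z u - g' p0 u) (at z within ?S)"
        if "z \<in> ?S" for z
        using that u by (auto intro!: derivative_eq_intros DERIV_subset[OF d])
      show "norm (g' z u - g' p0 u) \<le> e" if "z \<in> ?S" for z
        using that X0(3) r u by (auto simp: dist_norm dist_commute)
      show "y \<in> ?S" using y by (auto simp: dist_commute)
      show "p0 \<in> ?S" using S r by auto
    qed
    then show "\<bar>g y u - g p0 u - (y - p0) * g' p0 u\<bar> \<le> e * \<bar>y - p0\<bar>"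
      by (simp add: algebra_simps)
  qed
qed

lemma has_real_derivative_weighted_integral:
  fixes K :: "real \<Rightarrow> real" and g g' :: "real \<Rightarrow> real \<Rightarrow> real" and S :: "real set"
  assumes K: "K absolutely_integrable_on {0..1}"
    and S: "convex S" "p0 \<in> S"
    and d: "\<And>p u. p \<in> S \<Longrightarrow> u \<in> {0..1} \<Longrightarrow> ((\<lambda>p. g p u) has_real_derivative g' p u) (at p within S)"
    and c': "continuous_on (S \<times> {0..1}) (\<lambda>(p,u). g' p u)"
    and c: "\<And>p. p \<in> S \<Longrightarrow> continuous_on {0..1} (g p)"
  shows "((\<lambda>p. integral {0..1} (\<lambda>u. K u * g p u)) has_real_derivative
           integral {0..1} (\<lambda>u. K u * g' p0 u)) (at p0 within S)"
proof -
  define I where "I p = integral {0..1} (\<lambda>u. K u * g p u)" for p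
  define D where "D = integral {0..1} (\<lambda>u. K u * g' p0 u)"
  define M where "M = integral {0..1} (\<lambda>u. \<bar>K u\<bar>)"
  have M0: "M \<ge> 0"
    unfolding M_def using K by (intro integral_nonneg) (auto simp: absolutely_integrable_on_def)
  have g'c: "continuous_on {0..1} (g' p0)"
    by (rule continuous_on_compose2[OF c', of _ "\<lambda>u. (p0,u)", simplified])
      (use S in \<open>auto intro!: continuous_intros\<close>)
  have remainder: "I y - I p0 - (y - p0) * D =
      integral {0..1} (\<lambda>u. K u * (g y u - g p0 u - (y - p0) * g' p0 u))" if y: "y \<in> S" for y
  proof -
    have i1: "(\<lambda>u. K u * g y u) integrable_on {0..1}" by (rule integrable_times_continuous[OF K c[OF y]])
    have i2: "(\<lambda>u. K u * g p0 u) integrable_on {0..1}" by (rule integrable_times_continuous[OF K c[OF S(2)]])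
    have i3: "(\<lambda>u. (y - p0) * (K u * g' p0 u)) integrable_on {0..1}"
      by (intro integrable_on_mult_right integrable_times_continuous[OF K g'c])
    have "integral {0..1} (\<lambda>u. K u * (g y u - g p0 u - (y - p0) * g' p0 u))
        = integral {0..1} (\<lambda>u. (K u * g y u - K u * g p0 u) - (y - p0) * (K u * g' p0 u))"
      by (simp add: algebra_simps)
    also have "\<dots> = I y - I p0 - (y - p0) * D"
      unfolding I_def D_def using i1 i2 i3 by (simp add: integral_diff integrable_diff)
    finally show ?thesis by simp
  qed
  have "((\<lambda>y. (I y - I p0) / (y - p0)) \<longlongrightarrow> D) (at p0 within S)"
  proof (rule tendstoI)
    fix e :: real assume e: "e > 0"
    define e1 where "e1 = e / (2 * (M + 1))"
    have e1: "e1 > 0" using e M0 by (simp add: e1_def)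
    obtain r where r: "r > 0" "\<forall>y\<in>S. dist y p0 < r \<longrightarrow>
        (\<forall>u\<in>{0..1}. \<bar>g y u - g p0 u - (y - p0) * g' p0 u\<bar> \<le> e1 * \<bar>y - p0\<bar>)"
      using uniform_first_order_approximation[OF S d c' e1] by blast
    show "\<forall>\<^sub>F y in at p0 within S. dist ((I y - I p0) / (y - p0)) D < e"
      unfolding eventually_at
    proof (intro exI[of _ r] conjI r ballI impI)
      fix y assume y: "y \<in> S" "y \<noteq> p0 \<and> dist y p0 < r"
      have yp: "\<bar>y - p0\<bar> > 0" using y by simp
      have E: "\<bar>I y - I p0 - (y - p0) * D\<bar> \<le> M * (e1 * \<bar>y - p0\<bar>)"
        unfolding remainder[OF y(1)] M_def
        by (rule weighted_integral_abs_bound[OF K])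
          (use r y c[OF y(1)] c[OF S(2)] g'c in \<open>auto intro!: continuous_intros\<close>)
      have "(I y - I p0) / (y - p0) - D = (I y - I p0 - (y - p0) * D) / (y - p0)"
        using y by (simp add: field_simps)
      then have "dist ((I y - I p0) / (y - p0)) D = \<bar>I y - I p0 - (y - p0) * D\<bar> / \<bar>y - p0\<bar>"
        by (simp add: dist_real_def abs_divide)
      also have "\<dots> \<le> M * e1"
        using E yp by (simp add: divide_le_eq mult.assoc)
      also have "\<dots> < e"
        using M0 e by (simp add: e1_def field_simps) (smt (verit) mult_nonneg_nonneg)
      finally show "dist ((I y - I p0) / (y - p0)) D < e" .
    qed
  qed
  then show ?thesis unfolding has_field_derivative_iff I_def D_def .
qed

text \<open>The Erd\'elyi--Kober kernel \<open>(1 - u\<^sup>2)\<^sup>\<alpha>\<^sup>-\<^sup>1\<close> is integrable on \<open>[0,1]\<close> for \<open>\<alpha> > 0\<close>: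
  it is \<open>(1-u)\<^sup>\<alpha>\<^sup>-\<^sup>1\<close> (a Beta integrand) times the continuous factor \<open>(1+u)\<^sup>\<alpha>\<^sup>-\<^sup>1\<close>.\<close>
lemma kernel_absolutely_integrable:
  fixes \<alpha> :: real
  assumes "\<alpha> > 0"
  shows "(\<lambda>u. (1 - u^2) powr (\<alpha> - 1)) absolutely_integrable_on {0..1}"
proof -
  have "(\<lambda>t. t powr (1 - 1) * (1 - t) powr (\<alpha> - 1)) integrable_on {0..1}"
    using has_integral_Beta_real[of 1 \<alpha>] assms unfolding integrable_on_def by force
  then have "(\<lambda>u. (1 - u) powr (\<alpha> - 1)) integrable_on {0..1}"
    by (rule integrable_spike_finite[of "{0}", rotated 2]) auto
  then have "(\<lambda>u. (1 - u) powr (\<alpha> - 1)) absolutely_integrable_on {0..1}"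
    by (rule nonnegative_absolutely_integrable_1) auto
  moreover have "continuous_on {0..1} (\<lambda>u::real. (1 + u) powr (\<alpha> - 1))"
    by (rule continuous_on_powr') (auto intro!: continuous_intros)
  ultimately have prod_int: "(\<lambda>u. (1 - u) powr (\<alpha> - 1) * (1 + u) powr (\<alpha> - 1)) integrable_on {0..1}"
    by (rule integrable_times_continuous)
  have factor: "(1 - u) powr (\<alpha> - 1) * (1 + u) powr (\<alpha> - 1) = (1 - u^2) powr (\<alpha> - 1)"
    if "u \<in> {0..1}" for u :: real
    using that by (cases "u = 1") (auto simp: powr_mult[symmetric] power2_eq_square algebra_simps)
  have "(\<lambda>u. (1 - u^2) powr (\<alpha> - 1)) integrable_on {0..1} \<longleftrightarrow>
      (\<lambda>u. (1 - u) powr (\<alpha> - 1) * (1 + u) powr (\<alpha> - 1)) integrable_on {0..1}"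
    by (intro Henstock_Kurzweil_Integration.integrable_cong) (simp add: factor)
  with prod_int have "(\<lambda>u. (1 - u^2) powr (\<alpha> - 1)) integrable_on {0..1}"
    by simp
  then show ?thesis
    by (rule nonnegative_absolutely_integrable_1) auto
qed

text \<open>Of the \<open>C\<^sup>2\<close> hypothesis on the forcing we only need that
  \<open>F\<close> has a partial derivative \<open>F\<^sub>x\<close> and that \<open>F\<close>, \<open>F\<^sub>x\<close> are continuous on the closed
  half-plane.\<close>
locale duhamel =
  fixes F Fx :: "real \<Rightarrow> real \<Rightarrow> real" and c :: real
  assumes c_pos: "c > 0"
    and F_dx: "\<And>z s. s \<ge> 0 \<Longrightarrow> ((\<lambda>y. F y s) has_real_derivative Fx z s) (at z)"
    and F_cont: "continuous_on (UNIV \<times> {0..}) (\<lambda>(x,t). F x t)"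
    and Fx_cont: "continuous_on (UNIV \<times> {0..}) (\<lambda>(x,t). Fx x t)"
begin

lemma F_chain:
  assumes "s \<ge> 0" "(g has_real_derivative g') (at t within T)"
  shows "((\<lambda>t. F (g t) s) has_real_derivative Fx (g t) s * g') (at t within T)"
  using DERIV_chain[OF F_dx[OF assms(1)] assms(2)] by (simp add: o_def)

text \<open>An \<open>x\<close>-antiderivative of \<open>F\<close> that is jointly continuous; it turns the inner
  integral of Duhamel's formula into a difference of point values.\<close>
definition prim :: "real \<Rightarrow> real \<Rightarrow> real" where
  "prim z s = z * integral {0..1} (\<lambda>\<theta>. F (z*\<theta>) s)"

lemma prim_cont: "continuous_on (UNIV \<times> {0..}) (\<lambda>(z,s). prim z s)"
proof -
  have "continuous_on ((UNIV \<times> {0..}) \<times> cbox 0 1) (\<lambda>q::(real\<times>real)\<times>real. F (fst (fst q) * snd q) (snd (fst q)))"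
    by (rule continuous_on_compose_halfplane[OF F_cont]) (auto intro!: continuous_intros)
  then have "continuous_on (UNIV \<times> {0..}) (\<lambda>p::real\<times>real. integral (cbox 0 1) (\<lambda>\<theta>. F (fst p * \<theta>) (snd p)))"
    by (intro integral_continuous_on_param) (simp add: split_beta)
  then have "continuous_on (UNIV \<times> {0..}) (\<lambda>p::real\<times>real. fst p * integral {0..1} (\<lambda>\<theta>. F (fst p * \<theta>) (snd p)))"
    by (auto intro!: continuous_intros)
  then show ?thesis by (simp add: prim_def split_beta)
qed

lemma prim_deriv:
  assumes s: "s \<ge> 0"
  shows "((\<lambda>z. prim z s) has_real_derivative F z s) (at z)"
proof -
  have cF1: "continuous_on A (\<lambda>\<theta>. F (a * \<theta>) s)" for a A
    by (rule continuous_on_compose_halfplane[OF F_cont]) (auto intro!: continuous_intros s)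
  have cFx1: "continuous_on A (\<lambda>\<theta>. Fx (a * \<theta>) s)" for a A
    by (rule continuous_on_compose_halfplane[OF Fx_cont]) (auto intro!: continuous_intros s)
  have L: "((\<lambda>z. integral (cbox 0 1) (\<lambda>\<theta>. F (z*\<theta>) s)) has_real_derivative
             integral (cbox 0 1) (\<lambda>\<theta>. Fx (z*\<theta>) s * \<theta>)) (at z within UNIV)"
  proof (rule leibniz_rule_field_derivative)
    show "((\<lambda>z. F (z * \<theta>) s) has_real_derivative Fx (x * \<theta>) s * \<theta>) (at x within UNIV)" for x \<theta>
      by (rule F_chain[OF s]) (auto intro!: derivative_eq_intros)
    show "(\<lambda>\<theta>. F (x * \<theta>) s) integrable_on cbox 0 1" for x
      by (auto intro!: integrable_continuous_real cF1)
    show "continuous_on (UNIV \<times> cbox 0 1) (\<lambda>(x, \<theta>). Fx (x * \<theta>) s * \<theta>)"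
      by (auto simp: split_beta intro!: continuous_intros continuous_on_compose_halfplane[OF Fx_cont] s)
  qed auto
  have P: "((\<lambda>z. prim z s) has_real_derivative
      1 * integral {0..1} (\<lambda>\<theta>. F (z*\<theta>) s) + z * integral {0..1} (\<lambda>\<theta>. Fx (z*\<theta>) s * \<theta>)) (at z)"
    unfolding prim_def using L by (auto intro!: derivative_eq_intros)
  txt \<open>The derivative simplifies to \<open>F z s\<close> because \<open>\<theta> \<mapsto> \<theta> F(z\<theta>,s)\<close> has derivative
    \<open>F(z\<theta>,s) + \<theta> z F\<^sub>x(z\<theta>,s)\<close>.\<close>
  have ftc: "((\<lambda>\<theta>. F (z*\<theta>) s + \<theta> * (Fx (z*\<theta>) s * z)) has_integral (1 * F (z*1) s - 0 * F (z*0) s)) {0..1}"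
  proof (rule fundamental_theorem_of_calculus)
    show "((\<lambda>\<theta>. \<theta> * F (z*\<theta>) s) has_vector_derivative F (z*x) s + x * (Fx (z*x) s * z)) (at x within {0..1})" for x
      unfolding has_real_derivative_iff_has_vector_derivative[symmetric]
      by (auto intro!: derivative_eq_intros F_chain[OF s])
  qed auto
  have i1: "(\<lambda>\<theta>. F (z*\<theta>) s) integrable_on {0..1}" by (auto intro!: integrable_continuous_real cF1)
  have i2: "(\<lambda>\<theta>. \<theta> * (Fx (z*\<theta>) s * z)) integrable_on {0..1}"
    by (auto intro!: integrable_continuous_real continuous_intros cFx1)
  have "integral {0..1} (\<lambda>\<theta>. F (z*\<theta>) s) + integral {0..1} (\<lambda>\<theta>. \<theta> * (Fx (z*\<theta>) s * z)) = F z s"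
    using ftc integral_add[OF i1 i2] by (simp add: has_integral_iff)
  moreover have "integral {0..1} (\<lambda>\<theta>. \<theta> * (Fx (z*\<theta>) s * z)) = z * integral {0..1} (\<lambda>\<theta>. Fx (z*\<theta>) s * \<theta>)"
    by (simp add: integral_mult_right[symmetric] algebra_simps)
  ultimately show ?thesis using P by simp
qed

lemma prim_chain:
  assumes "s \<ge> 0" "(g has_real_derivative g') (at t within T)"
  shows "((\<lambda>t. prim (g t) s) has_real_derivative F (g t) s * g') (at t within T)"
  using DERIV_chain[OF prim_deriv[OF assms(1)] assms(2)] by (simp add: o_def)

lemma integral_eq_prim:
  assumes "s \<ge> 0" "a \<le> b"
  shows "integral {a..b} (\<lambda>y. F y s) = prim b s - prim a s"
proof -
  have "((\<lambda>y. F y s) has_integral (prim b s - prim a s)) {a..b}"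
    by (rule fundamental_theorem_of_calculus[OF assms(2)])
      (simp add: has_real_derivative_iff_has_vector_derivative[symmetric]
        has_field_derivative_at_within[OF prim_deriv[OF assms(1)]])
  then show ?thesis by (simp add: has_integral_iff)
qed

definition dependence_integral :: "real \<Rightarrow> real \<Rightarrow> real \<Rightarrow> real" where
  "dependence_integral x t s = prim (x + c*(t-s)) s - prim (x - c*(t-s)) s"

definition "wave_t x t = 1/2 * integral {0..t} (\<lambda>s. F (x + c*(t-s)) s + F (x - c*(t-s)) s)"
definition "wave_tt x t = F x t + c/2 * integral {0..t} (\<lambda>s. Fx (x + c*(t-s)) s - Fx (x - c*(t-s)) s)"
definition "wave_x x t = 1/(2*c) * integral {0..t} (\<lambda>s. F (x + c*(t-s)) s - F (x - c*(t-s)) s)"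
definition "wave_xx x t = 1/(2*c) * integral {0..t} (\<lambda>s. Fx (x + c*(t-s)) s - Fx (x - c*(t-s)) s)"

lemma wave_sol_eq:
  assumes t: "t \<ge> 0"
  shows "wave_sol c F x t = 1/(2*c) * integral {0..t} (dependence_integral x t)"
proof -
  have "integral {0..t} (\<lambda>s. integral {x - c * (t - s) .. x + c * (t - s)} (\<lambda>y. F y s))
      = integral {0..t} (dependence_integral x t)"
  proof (rule integral_cong)
    fix s assume s: "s \<in> {0..t}"
    then have "c * (t - s) \<ge> 0" using c_pos by auto
    then show "integral {x - c * (t - s) .. x + c * (t - s)} (\<lambda>y. F y s) = dependence_integral x t s"
      unfolding dependence_integral_def using s by (subst integral_eq_prim) auto
  qed
  then show ?thesis unfolding wave_sol_def by simp
qed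

text \<open>\<open>w\<^sub>t = wave_t\<close>: Leibniz rule with variable upper limit; the boundary term vanishes
  because the domain of dependence degenerates at \<open>s = t\<close>.\<close>
lemma wave_sol_dt:
  assumes t0: "t0 \<ge> 0"
  shows "((\<lambda>t. wave_sol c F x t) has_real_derivative wave_t x t0) (at t0 within {0..})"
proof -
  have V: "((\<lambda>t. integral {0..t} (dependence_integral x t)) has_real_derivative
      (dependence_integral x t0 t0 + integral {0..t0} (\<lambda>s. c * (F (x + c*(t0-s)) s + F (x - c*(t0-s)) s))))
      (at t0 within {0..})"
  proof (rule has_real_derivative_integral_upper_limit[OF _ _ _ t0])
    fix t s :: real assume s: "s \<ge> 0"
    have e1: "((\<lambda>t. x + c*(t-s)) has_real_derivative c) (at t)" by (auto intro!: derivative_eq_intros)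
    have e2: "((\<lambda>t. x - c*(t-s)) has_real_derivative -c) (at t)" by (auto intro!: derivative_eq_intros)
    from DERIV_diff[OF prim_chain[OF s e1] prim_chain[OF s e2]]
    show "((\<lambda>t. dependence_integral x t s) has_real_derivative
        c * (F (x + c*(t-s)) s + F (x - c*(t-s)) s)) (at t)"
      unfolding dependence_integral_def by (simp add: algebra_simps)
  next
    show "continuous_on (UNIV \<times> {0..}) (\<lambda>(t,s). dependence_integral x t s)"
      unfolding dependence_integral_def
      by (auto simp: split_beta intro!: continuous_intros continuous_on_compose_halfplane[OF prim_cont])
    show "continuous_on (UNIV \<times> {0..}) (\<lambda>(t,s). c * (F (x + c*(t-s)) s + F (x - c*(t-s)) s))"
      by (auto simp: split_beta intro!: continuous_intros continuous_on_compose_halfplane[OF F_cont])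
  qed
  have eq: "1/(2*c) * (dependence_integral x t0 t0
      + integral {0..t0} (\<lambda>s. c * (F (x + c*(t0-s)) s + F (x - c*(t0-s)) s))) = wave_t x t0"
    using c_pos unfolding wave_t_def dependence_integral_def by (simp add: integral_mult_right)
  show ?thesis
    by (rule has_field_derivative_transform_within[where d=1, OF DERIV_cmult[OF V, of "1/(2*c)", unfolded eq]])
      (use t0 wave_sol_eq in auto)
qed

text \<open>\<open>w\<^sub>t\<^sub>t = wave_tt\<close>, again by the Leibniz rule; now the boundary term is \<open>F(x,t)\<close>.\<close>
lemma wave_t_dt:
  assumes t0: "t0 \<ge> 0"
  shows "((\<lambda>t. wave_t x t) has_real_derivative wave_tt x t0) (at t0 within {0..})"
proof -
  have V: "((\<lambda>t. integral {0..t} (\<lambda>s. F (x + c*(t-s)) s + F (x - c*(t-s)) s)) has_real_derivative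
      ((F (x + c*(t0-t0)) t0 + F (x - c*(t0-t0)) t0)
        + integral {0..t0} (\<lambda>s. c * (Fx (x + c*(t0-s)) s - Fx (x - c*(t0-s)) s)))) (at t0 within {0..})"
  proof (rule has_real_derivative_integral_upper_limit[OF _ _ _ t0])
    fix t s :: real assume s: "s \<ge> 0"
    have e1: "((\<lambda>t. x + c*(t-s)) has_real_derivative c) (at t)" by (auto intro!: derivative_eq_intros)
    have e2: "((\<lambda>t. x - c*(t-s)) has_real_derivative -c) (at t)" by (auto intro!: derivative_eq_intros)
    from DERIV_add[OF F_chain[OF s e1] F_chain[OF s e2]]
    show "((\<lambda>t. F (x + c*(t-s)) s + F (x - c*(t-s)) s) has_real_derivative
        c * (Fx (x + c*(t-s)) s - Fx (x - c*(t-s)) s)) (at t)"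
      by (simp add: algebra_simps)
  next
    show "continuous_on (UNIV \<times> {0..}) (\<lambda>(t,s). F (x + c*(t-s)) s + F (x - c*(t-s)) s)"
      by (auto simp: split_beta intro!: continuous_intros continuous_on_compose_halfplane[OF F_cont])
    show "continuous_on (UNIV \<times> {0..}) (\<lambda>(t,s). c * (Fx (x + c*(t-s)) s - Fx (x - c*(t-s)) s))"
      by (auto simp: split_beta intro!: continuous_intros continuous_on_compose_halfplane[OF Fx_cont])
  qed
  moreover have "1/2 * ((F (x + c*(t0-t0)) t0 + F (x - c*(t0-t0)) t0)
      + integral {0..t0} (\<lambda>s. c * (Fx (x + c*(t0-s)) s - Fx (x - c*(t0-s)) s))) = wave_tt x t0"
    unfolding wave_tt_def by (simp add: integral_mult_right)
  ultimately show ?thesis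
    using DERIV_cmult[OF V, of "1/2"] unfolding wave_t_def by simp
qed

lemma wave_sol_dx:
  assumes t: "t \<ge> 0"
  shows "((\<lambda>x. wave_sol c F x t) has_real_derivative wave_x x0 t) (at x0)"
proof -
  have L: "((\<lambda>x. integral (cbox 0 t) (dependence_integral x t)) has_real_derivative
     integral (cbox 0 t) (\<lambda>s. F (x0 + c*(t-s)) s - F (x0 - c*(t-s)) s)) (at x0 within UNIV)"
  proof (rule leibniz_rule_field_derivative)
    fix x s assume s: "s \<in> cbox 0 t"
    have s0: "s \<ge> 0" using s by simp
    have e1: "((\<lambda>x. x + c*(t-s)) has_real_derivative 1) (at x within UNIV)" by (auto intro!: derivative_eq_intros)
    have e2: "((\<lambda>x. x - c*(t-s)) has_real_derivative 1) (at x within UNIV)" by (auto intro!: derivative_eq_intros)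
    from DERIV_diff[OF prim_chain[OF s0 e1] prim_chain[OF s0 e2]]
    show "((\<lambda>x. dependence_integral x t s) has_real_derivative F (x + c*(t-s)) s - F (x - c*(t-s)) s)
        (at x within UNIV)"
      unfolding dependence_integral_def by simp
  next
    fix x show "dependence_integral x t integrable_on cbox 0 t"
      unfolding dependence_integral_def
      by (rule integrable_continuous) (auto intro!: continuous_intros continuous_on_compose_halfplane[OF prim_cont])
  next
    show "continuous_on (UNIV \<times> cbox 0 t) (\<lambda>(x, s). F (x + c*(t-s)) s - F (x - c*(t-s)) s)"
      by (auto simp: split_beta intro!: continuous_intros continuous_on_compose_halfplane[OF F_cont])
  qed auto
  have "(\<lambda>x. wave_sol c F x t) = (\<lambda>x. 1/(2*c) * integral {0..t} (dependence_integral x t))"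
    using wave_sol_eq[OF t] by auto
  then show ?thesis
    using DERIV_cmult[OF L, of "1/(2*c)"] unfolding wave_x_def by simp
qed

lemma wave_x_dx:
  assumes t: "t \<ge> 0"
  shows "((\<lambda>x. wave_x x t) has_real_derivative wave_xx x0 t) (at x0)"
proof -
  have L: "((\<lambda>x. integral (cbox 0 t) (\<lambda>s. F (x + c*(t-s)) s - F (x - c*(t-s)) s)) has_real_derivative
     integral (cbox 0 t) (\<lambda>s. Fx (x0 + c*(t-s)) s - Fx (x0 - c*(t-s)) s)) (at x0 within UNIV)"
  proof (rule leibniz_rule_field_derivative)
    fix x s assume s: "s \<in> cbox 0 t"
    have s0: "s \<ge> 0" using s by simp
    have e1: "((\<lambda>x. x + c*(t-s)) has_real_derivative 1) (at x within UNIV)" by (auto intro!: derivative_eq_intros)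
    have e2: "((\<lambda>x. x - c*(t-s)) has_real_derivative 1) (at x within UNIV)" by (auto intro!: derivative_eq_intros)
    from DERIV_diff[OF F_chain[OF s0 e1] F_chain[OF s0 e2]]
    show "((\<lambda>x. F (x + c*(t-s)) s - F (x - c*(t-s)) s) has_real_derivative
        Fx (x + c*(t-s)) s - Fx (x - c*(t-s)) s) (at x within UNIV)"
      by simp
  next
    fix x show "(\<lambda>s. F (x + c*(t-s)) s - F (x - c*(t-s)) s) integrable_on cbox 0 t"
      by (rule integrable_continuous) (auto intro!: continuous_intros continuous_on_compose_halfplane[OF F_cont])
  next
    show "continuous_on (UNIV \<times> cbox 0 t) (\<lambda>(x, s). Fx (x + c*(t-s)) s - Fx (x - c*(t-s)) s)"
      by (auto simp: split_beta intro!: continuous_intros continuous_on_compose_halfplane[OF Fx_cont])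
  qed auto
  then show ?thesis
    using DERIV_cmult[OF L, of "1/(2*c)"] unfolding wave_x_def wave_xx_def by simp
qed

lemma wave_t_cont: "continuous_on (UNIV \<times> {0..}) (\<lambda>(x,t). wave_t x t)"
proof -
  have "continuous_on (UNIV \<times> {0..}) (\<lambda>(x,t). integral {0..t} (\<lambda>s. F (x + c*(t-s)) s + F (x - c*(t-s)) s))"
    by (rule continuous_on_integral_upper_limit)
      (auto simp: split_beta intro!: continuous_intros continuous_on_compose_halfplane[OF F_cont])
  then show ?thesis
    unfolding wave_t_def by (auto simp: split_beta intro!: continuous_intros)
qed

lemma wave_x_cont: "continuous_on (UNIV \<times> {0..}) (\<lambda>(x,t). wave_x x t)"
proof -
  have "continuous_on (UNIV \<times> {0..}) (\<lambda>(x,t). integral {0..t} (\<lambda>s. F (x + c*(t-s)) s - F (x - c*(t-s)) s))"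
    by (rule continuous_on_integral_upper_limit)
      (auto simp: split_beta intro!: continuous_intros continuous_on_compose_halfplane[OF F_cont])
  then show ?thesis
    unfolding wave_x_def using c_pos by (auto simp: split_beta intro!: continuous_intros)
qed

lemma wave_xx_cont: "continuous_on (UNIV \<times> {0..}) (\<lambda>(x,t). wave_xx x t)"
proof -
  have "continuous_on (UNIV \<times> {0..}) (\<lambda>(x,t). integral {0..t} (\<lambda>s. Fx (x + c*(t-s)) s - Fx (x - c*(t-s)) s))"
    by (rule continuous_on_integral_upper_limit)
      (auto simp: split_beta intro!: continuous_intros continuous_on_compose_halfplane[OF Fx_cont])
  then show ?thesis
    unfolding wave_xx_def using c_pos by (auto simp: split_beta intro!: continuous_intros)
qed

lemma wave_equation: "wave_tt x t = c^2 * wave_xx x t + F x t"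
  unfolding wave_tt_def wave_xx_def using c_pos by (simp add: power2_eq_square field_simps)

end

locale EPD_average =
  fixes \<alpha> c :: real and F w wt wtt wx wxx :: "real \<Rightarrow> real \<Rightarrow> real"
  assumes alpha_pos: "\<alpha> > 0"
    and w_dt: "\<And>x t. t \<ge> 0 \<Longrightarrow> ((\<lambda>s. w x s) has_real_derivative wt x t) (at t within {0..})"
    and wt_dt: "\<And>x t. t \<ge> 0 \<Longrightarrow> ((\<lambda>s. wt x s) has_real_derivative wtt x t) (at t within {0..})"
    and w_dx: "\<And>x t. t \<ge> 0 \<Longrightarrow> ((\<lambda>y. w y t) has_real_derivative wx x t) (at x)"
    and wx_dx: "\<And>x t. t \<ge> 0 \<Longrightarrow> ((\<lambda>y. wx y t) has_real_derivative wxx x t) (at x)"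
    and F_cont: "continuous_on (UNIV \<times> {0..}) (\<lambda>(x,t). F x t)"
    and wt_cont: "continuous_on (UNIV \<times> {0..}) (\<lambda>(x,t). wt x t)"
    and wx_cont: "continuous_on (UNIV \<times> {0..}) (\<lambda>(x,t). wx x t)"
    and wxx_cont: "continuous_on (UNIV \<times> {0..}) (\<lambda>(x,t). wxx x t)"
    and wave_eq: "\<And>x t. t \<ge> 0 \<Longrightarrow> wtt x t = c^2 * wxx x t + F x t"
    and w_init: "\<And>x. w x 0 = 0"
    and wt_init: "\<And>x. wt x 0 = 0"
begin

lemma wtt_cont: "continuous_on (UNIV \<times> {0..}) (\<lambda>(x,t). wtt x t)"
proof -
  have "continuous_on (UNIV \<times> {0..}) (\<lambda>(x,t). c^2 * wxx x t + F x t)"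
    using wxx_cont F_cont by (auto simp: split_beta intro!: continuous_intros)
  then show ?thesis
    by (rule continuous_on_eq) (auto simp: wave_eq)
qed

definition kernel :: "real \<Rightarrow> real" where
  "kernel u = (1 - u^2) powr (\<alpha> - 1)"

definition avg :: "(real \<Rightarrow> real) \<Rightarrow> real" where
  "avg h = 2 / Beta \<alpha> (1/2) * integral {0..1} (\<lambda>u. kernel u * h u)"

lemma EPD_avg_eq: "EPD_avg \<alpha> g x t = avg (\<lambda>u. g x (u * t))"
  unfolding EPD_avg_def avg_def kernel_def ..

lemma kernel_integrable: "kernel absolutely_integrable_on {0..1}"
  unfolding kernel_def[abs_def] by (rule kernel_absolutely_integrable[OF alpha_pos])

lemma avg_add:
  assumes "continuous_on {0..1} h1" "continuous_on {0..1} h2"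
  shows "avg (\<lambda>u. h1 u + h2 u) = avg h1 + avg h2"
  unfolding avg_def
  using integral_add[OF integrable_times_continuous[OF kernel_integrable assms(1)]
      integrable_times_continuous[OF kernel_integrable assms(2)]]
  by (simp add: distrib_left)

lemma avg_diff:
  assumes "continuous_on {0..1} h1" "continuous_on {0..1} h2"
  shows "avg (\<lambda>u. h1 u - h2 u) = avg h1 - avg h2"
  unfolding avg_def
  using integral_diff[OF integrable_times_continuous[OF kernel_integrable assms(1)]
      integrable_times_continuous[OF kernel_integrable assms(2)]]
  by (simp add: right_diff_distrib)

lemma avg_cmult: "avg (\<lambda>u. a * h u) = a * avg h"
  unfolding avg_def by (simp add: mult.left_commute[of _ a])

lemma avg_cong:
  assumes "\<And>u. u \<in> {0..1} \<Longrightarrow> h1 u = h2 u"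
  shows "avg h1 = avg h2"
proof -
  have "integral {0..1} (\<lambda>u. kernel u * h1 u) = integral {0..1} (\<lambda>u. kernel u * h2 u)"
    by (rule integral_cong) (simp add: assms)
  then show ?thesis unfolding avg_def by simp
qed

lemma avg_has_derivative:
  assumes "convex S" "p0 \<in> S"
    and "\<And>p u. p \<in> S \<Longrightarrow> u \<in> {0..1} \<Longrightarrow> ((\<lambda>p. g p u) has_real_derivative g' p u) (at p within S)"
    and "continuous_on (S \<times> {0..1}) (\<lambda>(p,u). g' p u)"
    and "\<And>p. p \<in> S \<Longrightarrow> continuous_on {0..1} (g p)"
  shows "((\<lambda>p. avg (g p)) has_real_derivative avg (g' p0)) (at p0 within S)"
  unfolding avg_def
  by (intro DERIV_cmult has_real_derivative_weighted_integral[OF kernel_integrable assms])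

definition "vt x t = avg (\<lambda>u. u * wt x (u*t))"
definition "vtt x t = avg (\<lambda>u. u^2 * wtt x (u*t))"
definition "vx x t = avg (\<lambda>u. wx x (u*t))"
definition "vxx x t = avg (\<lambda>u. wxx x (u*t))"

lemma v_dt:
  assumes t: "t \<ge> 0"
  shows "((\<lambda>s. EPD_avg \<alpha> w x s) has_real_derivative vt x t) (at t within {0..})"
  unfolding EPD_avg_eq vt_def
proof (rule avg_has_derivative)
  fix p u :: real assume "p \<in> {0..}" "u \<in> {0..1}"
  then have "((\<lambda>p. w x (u*p)) has_real_derivative wt x (u*p) * u) (at p within {0..})"
    by (intro has_real_derivative_scaled_halfline[OF w_dt]) auto
  then show "((\<lambda>p. w x (u*p)) has_real_derivative u * wt x (u*p)) (at p within {0..})"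
    by (simp only: mult.commute[of "wt x (u*p)" u])
next
  show "continuous_on ({0..} \<times> {0..1}) (\<lambda>(p, u). u * wt x (u*p))"
    by (auto simp: split_beta intro!: continuous_intros continuous_on_compose_halfplane[OF wt_cont])
  show "continuous_on {0..1} (\<lambda>u. w x (u*p))" if "p \<in> {0..}" for p
    using that by (auto intro!: continuous_intros continuous_on_compose_halfline[OF w_dt])
qed (use t in \<open>auto simp: convex_real_interval\<close>)

lemma vt_dt:
  assumes t: "t \<ge> 0"
  shows "((\<lambda>s. vt x s) has_real_derivative vtt x t) (at t within {0..})"
  unfolding vt_def vtt_def
proof (rule avg_has_derivative)
  fix p u :: real assume "p \<in> {0..}" "u \<in> {0..1}"
  then have "((\<lambda>p. wt x (u*p)) has_real_derivative wtt x (u*p) * u) (at p within {0..})"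
    by (intro has_real_derivative_scaled_halfline[OF wt_dt]) auto
  from DERIV_cmult[OF this, of u]
  show "((\<lambda>p. u * wt x (u*p)) has_real_derivative u^2 * wtt x (u*p)) (at p within {0..})"
    by (simp add: power2_eq_square algebra_simps)
next
  show "continuous_on ({0..} \<times> {0..1}) (\<lambda>(p, u). u^2 * wtt x (u*p))"
    by (auto simp: split_beta intro!: continuous_intros continuous_on_compose_halfplane[OF wtt_cont])
  show "continuous_on {0..1} (\<lambda>u. u * wt x (u*p))" if "p \<in> {0..}" for p
    using that by (auto intro!: continuous_intros continuous_on_compose_halfline[OF wt_dt])
qed (use t in \<open>auto simp: convex_real_interval\<close>)

lemma v_dx:
  assumes t: "t \<ge> 0"
  shows "((\<lambda>y. EPD_avg \<alpha> w y t) has_real_derivative vx x t) (at x)"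
  unfolding EPD_avg_eq vx_def
proof (rule avg_has_derivative)
  fix p u :: real assume "u \<in> {0..1}"
  then show "((\<lambda>p. w p (u*t)) has_real_derivative wx p (u*t)) (at p within UNIV)"
    using t by (intro w_dx) auto
next
  show "continuous_on (UNIV \<times> {0..1}) (\<lambda>(p, u). wx p (u*t))"
    using t by (auto simp: split_beta intro!: continuous_intros continuous_on_compose_halfplane[OF wx_cont])
  show "continuous_on {0..1} (\<lambda>u. w p (u*t))" for p
    using t by (auto intro!: continuous_intros continuous_on_compose_halfline[OF w_dt])
qed auto

lemma vx_dx:
  assumes t: "t \<ge> 0"
  shows "((\<lambda>y. vx y t) has_real_derivative vxx x t) (at x)"
  unfolding vx_def vxx_def
proof (rule avg_has_derivative)
  fix p u :: real assume "u \<in> {0..1}"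
  then show "((\<lambda>p. wx p (u*t)) has_real_derivative wxx p (u*t)) (at p within UNIV)"
    using t by (intro wx_dx) auto
next
  show "continuous_on (UNIV \<times> {0..1}) (\<lambda>(p, u). wxx p (u*t))"
    using t by (auto simp: split_beta intro!: continuous_intros continuous_on_compose_halfplane[OF wxx_cont])
  show "continuous_on {0..1} (\<lambda>u. wx p (u*t))" for p
    using t by (auto simp: split_beta intro!: continuous_intros continuous_on_compose_halfplane[OF wx_cont])
qed auto

text \<open>Fundamental theorem of calculus for \<open>\<Phi>(u) = (1-u\<^sup>2)\<^sup>\<alpha> w\<^sub>t(x,ut)\<close> on \<open>[0,1]\<close>: both boundary
  values vanish, at \<open>u = 0\<close> because \<open>w\<^sub>t(x,0) = 0\<close> and at \<open>u = 1\<close> because \<open>\<alpha> > 0\<close>.\<close>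
lemma integral_derivative_boundary_term:
  assumes t: "t > 0"
  shows "integral {0..1} (\<lambda>u. \<alpha> * (1 - u^2) powr (\<alpha> - 1) * (-2*u) * wt x (u*t)
           + (1 - u^2) powr \<alpha> * (wtt x (u*t) * t)) = 0"
proof -
  define \<Phi> where "\<Phi> u = (1 - u^2) powr \<alpha> * wt x (u*t)" for u
  have "((\<lambda>u. \<alpha> * (1 - u^2) powr (\<alpha> - 1) * (-2*u) * wt x (u*t) + (1 - u^2) powr \<alpha> * (wtt x (u*t) * t))
      has_integral (\<Phi> 1 - \<Phi> 0)) {0..1}"
  proof (rule fundamental_theorem_of_calculus_interior)
    show "continuous_on {0..1} \<Phi>"
      unfolding \<Phi>_def using t alpha_pos
      by (intro continuous_intros continuous_on_powr' continuous_on_compose_halfline[OF wt_dt])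
        (auto simp: power_le_one)
  next
    fix u :: real assume u: "u \<in> {0<..<1}"
    have "u*u < 1*1" using u by (intro mult_strict_mono) auto
    then have pos: "1 - u^2 > 0" by (simp add: power2_eq_square)
    have d1: "((\<lambda>u. (1 - u^2) powr \<alpha>) has_real_derivative \<alpha> * (1 - u^2) powr (\<alpha> - 1) * (-2*u)) (at u)"
      using DERIV_fun_powr[of "\<lambda>u. 1 - u^2" "-2*u" u \<alpha>] pos
      by (auto intro!: derivative_eq_intros)
    have "((\<lambda>u. wt x (t*u)) has_real_derivative wtt x (t*u) * t) (at u within {0..})"
      using u t by (intro has_real_derivative_scaled_halfline[OF wt_dt]) auto
    then have "((\<lambda>u. wt x (u*t)) has_real_derivative wtt x (u*t) * t) (at u within {0..})"
      by (simp only: mult.commute[of t])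
    then have d2: "((\<lambda>u. wt x (u*t)) has_real_derivative wtt x (u*t) * t) (at u)"
      by (rule has_real_derivative_halfline_interior) (use u in simp)
    show "(\<Phi> has_vector_derivative
        \<alpha> * (1 - u^2) powr (\<alpha> - 1) * (-2*u) * wt x (u*t) + (1 - u^2) powr \<alpha> * (wtt x (u*t) * t)) (at u)"
      unfolding \<Phi>_def has_real_derivative_iff_has_vector_derivative[symmetric]
      using DERIV_mult[OF d1 d2] by (simp add: mult.commute)
  qed simp
  moreover have "\<Phi> 1 - \<Phi> 0 = 0" unfolding \<Phi>_def using alpha_pos by (simp add: wt_init)
  ultimately show ?thesis by (simp add: has_integral_iff)
qed

text \<open>Integration by parts against the kernel: since \<open>(1-u\<^sup>2)\<^sup>\<alpha> = (1-u\<^sup>2)\<^sup>\<alpha>\<^sup>-\<^sup>1 (1-u\<^sup>2)\<close>, the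
  integrand above is the kernel times a continuous function, which gives
  \<open>t \<cdot> avg((1-u\<^sup>2) w\<^sub>t\<^sub>t(x,ut)) = 2\<alpha> \<cdot> avg(u w\<^sub>t(x,ut))\<close>.\<close>
lemma integration_by_parts:
  assumes t: "t > 0"
  shows "t * avg (\<lambda>u. (1 - u^2) * wtt x (u*t)) = 2 * \<alpha> * avg (\<lambda>u. u * wt x (u*t))"
proof -
  have integrand: "\<alpha> * (1 - u^2) powr (\<alpha> - 1) * (-2*u) * wt x (u*t) + (1 - u^2) powr \<alpha> * (wtt x (u*t) * t)
      = kernel u * (t * ((1 - u^2) * wtt x (u*t)) - 2 * \<alpha> * (u * wt x (u*t)))"
    if u: "u \<in> {0..1}" for u
  proof -
    have pw: "(1 - u^2) powr \<alpha> = (1 - u^2) powr (\<alpha> - 1) * (1 - u^2)"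
      using u by (cases "1 - u^2 = 0") (auto simp: powr_diff power_le_one less_le)
    show ?thesis unfolding kernel_def pw by (simp add: algebra_simps)
  qed
  have "integral {0..1} (\<lambda>u. kernel u * (t * ((1 - u^2) * wtt x (u*t)) - 2 * \<alpha> * (u * wt x (u*t))))
      = integral {0..1} (\<lambda>u. \<alpha> * (1 - u^2) powr (\<alpha> - 1) * (-2*u) * wt x (u*t)
           + (1 - u^2) powr \<alpha> * (wtt x (u*t) * t))"
    by (rule integral_cong) (use integrand in auto)
  then have "avg (\<lambda>u. t * ((1 - u^2) * wtt x (u*t)) - 2 * \<alpha> * (u * wt x (u*t))) = 0"
    unfolding avg_def using integral_derivative_boundary_term[OF t, of x] by simp
  moreover have "avg (\<lambda>u. t * ((1 - u^2) * wtt x (u*t)) - 2 * \<alpha> * (u * wt x (u*t)))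
      = t * avg (\<lambda>u. (1 - u^2) * wtt x (u*t)) - 2 * \<alpha> * avg (\<lambda>u. u * wt x (u*t))"
    using t
    by (subst avg_diff) (auto simp: avg_cmult intro!: continuous_intros
        continuous_on_compose_halfplane[OF wtt_cont] continuous_on_compose_halfline[OF wt_dt])
  ultimately show ?thesis by simp
qed

lemma EPD_equation:
  assumes t: "t > 0"
  shows "vtt x t + 2 * \<alpha> / t * vt x t = c^2 * vxx x t + EPD_avg \<alpha> F x t"
proof -
  have cont: "continuous_on {0..1} (\<lambda>u. wtt x (u*t))" "continuous_on {0..1} (\<lambda>u. wxx x (u*t))"
    "continuous_on {0..1} (\<lambda>u. F x (u*t))"
    using t by (auto intro!: continuous_intros continuous_on_compose_halfplane[OF wtt_cont]
        continuous_on_compose_halfplane[OF wxx_cont] continuous_on_compose_halfplane[OF F_cont])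
  have "vtt x t = avg (\<lambda>u. wtt x (u*t)) - avg (\<lambda>u. (1 - u^2) * wtt x (u*t))"
    unfolding vtt_def
    by (subst avg_diff[symmetric]) (auto intro!: avg_cong cont continuous_intros simp: algebra_simps)
  also have "avg (\<lambda>u. wtt x (u*t)) = c^2 * vxx x t + EPD_avg \<alpha> F x t"
  proof -
    have "avg (\<lambda>u. wtt x (u*t)) = avg (\<lambda>u. c^2 * wxx x (u*t) + F x (u*t))"
      using t by (intro avg_cong) (simp add: wave_eq)
    then show ?thesis
      unfolding vxx_def EPD_avg_eq using cont by (simp add: avg_add avg_cmult continuous_intros)
  qed
  also have "avg (\<lambda>u. (1 - u^2) * wtt x (u*t)) = 2 * \<alpha> / t * vt x t"
    using integration_by_parts[OF t, of x] t unfolding vt_def by (simp add: field_simps)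
  finally show ?thesis by simp
qed

lemma EPD_solution:
  "\<exists>vt vtt vx vxx.
     (\<forall>x. \<forall>t>0.
        ((\<lambda>s. EPD_avg \<alpha> w x s) has_real_derivative vt x t) (at t) \<and>
        ((\<lambda>s. vt x s) has_real_derivative vtt x t) (at t) \<and>
        ((\<lambda>y. EPD_avg \<alpha> w y t) has_real_derivative vx x t) (at x) \<and>
        ((\<lambda>y. vx y t) has_real_derivative vxx x t) (at x) \<and>
        vtt x t + 2 * \<alpha> / t * vt x t = c^2 * vxx x t + EPD_avg \<alpha> F x t) \<and>
     (\<forall>x. EPD_avg \<alpha> w x 0 = 0 \<and> ((\<lambda>s. EPD_avg \<alpha> w x s) has_real_derivative 0) (at 0 within {0..}))"
proof (intro exI conjI allI impI)
  fix x t :: real assume t: "t > 0"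
  show "((\<lambda>s. EPD_avg \<alpha> w x s) has_real_derivative vt x t) (at t)"
    using has_real_derivative_halfline_interior[OF v_dt t] t by simp
  show "((\<lambda>s. vt x s) has_real_derivative vtt x t) (at t)"
    using has_real_derivative_halfline_interior[OF vt_dt t] t by simp
  show "((\<lambda>y. EPD_avg \<alpha> w y t) has_real_derivative vx x t) (at x)"
    using v_dx t by simp
  show "((\<lambda>y. vx y t) has_real_derivative vxx x t) (at x)"
    using vx_dx t by simp
  show "vtt x t + 2 * \<alpha> / t * vt x t = c^2 * vxx x t + EPD_avg \<alpha> F x t"
    by (rule EPD_equation[OF t])
next
  fix x :: real
  show "EPD_avg \<alpha> w x 0 = 0"
    unfolding EPD_avg_def by (simp add: w_init)
  have "vt x 0 = 0" unfolding vt_def avg_def by (simp add: wt_init)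
  then show "((\<lambda>s. EPD_avg \<alpha> w x s) has_real_derivative 0) (at 0 within {0..})"
    using v_dt[of 0 x] by simp
qed

end

theorem theorem2p1:
  fixes c \<alpha> :: real and F :: "real \<Rightarrow> real \<Rightarrow> real"
  assumes "c > 0" and "\<alpha> > 0" and "C2_halfplane F"
  defines "w \<equiv> wave_sol c F"
  defines "v \<equiv> EPD_avg \<alpha> w"
  shows "\<exists>vt vtt vx vxx.
           (\<forall>x. \<forall>t>0.
              ((\<lambda>s. v x s) has_real_derivative vt x t) (at t) \<and>
              ((\<lambda>s. vt x s) has_real_derivative vtt x t) (at t) \<and>
              ((\<lambda>y. v y t) has_real_derivative vx x t) (at x) \<and>
              ((\<lambda>y. vx y t) has_real_derivative vxx x t) (at x) \<and>
              vtt x t + 2 * \<alpha> / t * vt x t = c^2 * vxx x t + EPD_avg \<alpha> F x t) \<and>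
           (\<forall>x. v x 0 = 0 \<and> ((\<lambda>s. v x s) has_real_derivative 0) (at 0 within {0..}))"
proof -
  from assms(3) obtain Fx where
    "\<And>z s. s \<ge> 0 \<Longrightarrow> ((\<lambda>y. F y s) has_real_derivative Fx z s) (at z)"
    "continuous_on (UNIV \<times> {0..}) (\<lambda>(x,t). F x t)"
    "continuous_on (UNIV \<times> {0..}) (\<lambda>(x,t). Fx x t)"
    unfolding C2_halfplane_def by blast
  then interpret duhamel F Fx c
    using assms(1) by unfold_locales
  interpret EPD_average \<alpha> c F w wave_t wave_tt wave_x wave_xx
    unfolding w_def
    by unfold_locales (use assms(2) wave_sol_dt wave_t_dt wave_sol_dx wave_x_dx F_cont wave_t_cont
        wave_x_cont wave_xx_cont wave_equation in \<open>auto simp: wave_sol_def wave_t_def\<close>)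
  show ?thesis
    unfolding v_def by (rule EPD_solution)
qed

end
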